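(* Let $n\ge0$ and $k\ge1$ be integers, $\mathcal{H}$ a separable infinite-dimensional complex Hilbert space with orthonormal basis $\{e_m\}_{m\ge0}$, and $T$ a bounded linear operator on $\mathcal{H}$ such that for some scalars $a_{ij}$ ($0\le i\le n+k$, $0\le j\le n$), $Te_j=\sum_{i=0}^{n+k}a_{ij}e_i$ for $0\le j\le n$ and $Te_j=e_{j+k}$ for $j\ge n+1$. Suppose the matrix $A_1=(a_{ij})_{0\le i,j\le n}$ is a contraction on $\mathbb{C}^{n+1}$ (no contractivity of $T$ itself is assumed). Then $T$ has no non-zero eigenvalue if and only if for every eigenvector $(h_0,\dots,h_n)$ of $A_1$ corresponding to a non-zero eigenvalue, there exists $l\in\{1,\dots,k\}$ with $\sum_{r=0}^{n}a_{n+l,r}h_r\neq0$. *)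

theory Defs
  imports "HOL-Analysis.Analysis"
begin

text \<open>The separable infinite-dimensional complex Hilbert space H with orthonormal basis
  (e_m) is represented through its coordinates w.r.t. that basis, i.e. as the space
  l2(N) of square-summable complex sequences; e_m becomes the m-th unit sequence.\<close>

definition ell2 :: "(nat \<Rightarrow> complex) set" where
  "ell2 = {x. summable (\<lambda>m. (cmod (x m))\<^sup>2)}"

definition ell2_norm :: "(nat \<Rightarrow> complex) \<Rightarrow> real" where
  "ell2_norm x = sqrt (\<Sum>m. (cmod (x m))\<^sup>2)"

definition unit_seq :: "nat \<Rightarrow> nat \<Rightarrow> complex" where
  "unit_seq j = (\<lambda>m. if m = j then 1 else 0)"

definition bounded_linear_op_ell2 :: "((nat \<Rightarrow> complex) \<Rightarrow> (nat \<Rightarrow> complex)) \<Rightarrow> bool" where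
  "bounded_linear_op_ell2 T \<longleftrightarrow>
     (\<forall>x\<in>ell2. T x \<in> ell2) \<and>
     (\<forall>x\<in>ell2. \<forall>y\<in>ell2. T (\<lambda>m. x m + y m) = (\<lambda>m. T x m + T y m)) \<and>
     (\<forall>c. \<forall>x\<in>ell2. T (\<lambda>m. c * x m) = (\<lambda>m. c * T x m)) \<and>
     (\<exists>C. \<forall>x\<in>ell2. ell2_norm (T x) \<le> C * ell2_norm x)"

definition is_eigenvalue_ell2 :: "((nat \<Rightarrow> complex) \<Rightarrow> (nat \<Rightarrow> complex)) \<Rightarrow> complex \<Rightarrow> bool" where
  "is_eigenvalue_ell2 T \<mu> \<longleftrightarrow> (\<exists>x\<in>ell2. x \<noteq> (\<lambda>_. 0) \<and> T x = (\<lambda>m. \<mu> * x m))"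

definition is_contraction_matrix :: "nat \<Rightarrow> (nat \<Rightarrow> nat \<Rightarrow> complex) \<Rightarrow> bool" where
  "is_contraction_matrix n a \<longleftrightarrow>
     (\<forall>h :: nat \<Rightarrow> complex.
        (\<Sum>i\<le>n. (cmod (\<Sum>j\<le>n. a i j * h j))\<^sup>2) \<le> (\<Sum>j\<le>n. (cmod (h j))\<^sup>2))"

definition is_matrix_eigenvector :: "nat \<Rightarrow> (nat \<Rightarrow> nat \<Rightarrow> complex) \<Rightarrow> complex \<Rightarrow> (nat \<Rightarrow> complex) \<Rightarrow> bool" where
  "is_matrix_eigenvector n a \<mu> h \<longleftrightarrow>
     (\<exists>i\<le>n. h i \<noteq> 0) \<and> (\<forall>i\<le>n. (\<Sum>r\<le>n. a i r * h r) = \<mu> * h i)"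

end

theory Submission imports Defs begin

text \<open>Every coordinate functional of \<open>T\<close> is continuous on \<open>\<ell>\<^sup>2\<close>, so \<open>T\<close> is determined by
  its values on the basis: \<open>(T x)\<^sub>i = (A x\<^sub>0\<^sub>.\<^sub>.\<^sub>n)\<^sub>i\<close> for \<open>i \<le> n + k\<close> and \<open>(T x)\<^sub>i = x\<^sub>i\<^sub>-\<^sub>k\<close> beyond.
  An eigenvector \<open>h\<close> of \<open>A\<^sub>1\<close> whose image has no component along \<open>e\<^sub>n\<^sub>+\<^sub>1, \<dots>, e\<^sub>n\<^sub>+\<^sub>k\<close> is
  therefore itself an eigenvector of \<open>T\<close>. Conversely, an eigenvector \<open>x\<close> of \<open>T\<close> for \<open>\<mu> \<noteq> 0\<close>
  has a non-zero head \<open>(x\<^sub>0, \<dots>, x\<^sub>n)\<close>, which is an eigenvector of \<open>A\<^sub>1\<close>; contractivity gives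
  \<open>|\<mu>| \<le> 1\<close>, and \<open>x\<^sub>m = \<mu> x\<^sub>m\<^sub>+\<^sub>k\<close> (\<open>m > n\<close>) makes \<open>|x\<^sub>m|\<close> non-decreasing along each residue
  class mod \<open>k\<close>. Square summability then forces \<open>x\<^sub>n\<^sub>+\<^sub>1 = \<dots> = x\<^sub>n\<^sub>+\<^sub>k = 0\<close>, i.e. the components
  of \<open>A h\<close> along \<open>e\<^sub>n\<^sub>+\<^sub>l\<close> vanish.\<close>

definition truncate :: "nat \<Rightarrow> (nat \<Rightarrow> complex) \<Rightarrow> nat \<Rightarrow> complex" where
  "truncate N x = (\<lambda>m. if m \<le> N then x m else 0)"

definition tail :: "nat \<Rightarrow> (nat \<Rightarrow> complex) \<Rightarrow> nat \<Rightarrow> complex" where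
  "tail N x = (\<lambda>m. if m \<le> N then 0 else x m)"

definition matrix_shift :: "nat \<Rightarrow> nat \<Rightarrow> (nat \<Rightarrow> nat \<Rightarrow> complex) \<Rightarrow> (nat \<Rightarrow> complex) \<Rightarrow> nat \<Rightarrow> complex" where
  "matrix_shift n k a x = (\<lambda>i. if i \<le> n + k then (\<Sum>j\<le>n. a i j * x j) else x (i - k))"

lemma truncate_in_ell2: "truncate N x \<in> ell2"
  unfolding ell2_def truncate_def by (auto intro!: summable_finite[of "{..N}"] split: if_splits)

lemma unit_seq_in_ell2: "unit_seq j \<in> ell2"
  unfolding ell2_def unit_seq_def by (auto intro!: summable_finite[of "{j}"] split: if_splits)

lemma tail_in_ell2: "x \<in> ell2 \<Longrightarrow> tail N x \<in> ell2"
  unfolding ell2_def tail_def by (auto intro: summable_comparison_test'[where N=0])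

lemma truncate_plus_tail: "x = (\<lambda>m. truncate N x m + tail N x m)"
  unfolding truncate_def tail_def by auto

lemma cmod_le_ell2_norm:
  assumes "x \<in> ell2"
  shows "cmod (x i) \<le> ell2_norm x"
proof -
  have "(\<Sum>m\<in>{i}. (cmod (x m))\<^sup>2) \<le> (\<Sum>m. (cmod (x m))\<^sup>2)"
    using assms unfolding ell2_def by (intro sum_le_suminf) auto
  then have "sqrt ((cmod (x i))\<^sup>2) \<le> ell2_norm x"
    unfolding ell2_norm_def using real_sqrt_le_mono by fastforce
  then show ?thesis by simp
qed

lemma ell2_norm_tail_tendsto_0:
  assumes "x \<in> ell2"
  shows "(\<lambda>N. ell2_norm (tail N x)) \<longlonglongrightarrow> 0"
proof -
  let ?f = "\<lambda>m. (cmod (x m))\<^sup>2"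
  have f: "summable ?f" using assms unfolding ell2_def by simp
  have head: "summable (\<lambda>m. if m \<le> N then ?f m else 0)"
    "(\<Sum>m. if m \<le> N then ?f m else 0) = (\<Sum>m\<le>N. ?f m)" for N
    by (auto intro!: summable_finite[of "{..N}"]) (subst suminf_finite[of "{..N}"]; simp)
  have "(\<Sum>m. (cmod (tail N x m))\<^sup>2) = (\<Sum>m. ?f m - (if m \<le> N then ?f m else 0))" for N
    unfolding tail_def by (rule arg_cong[where f = suminf]) auto
  then have norm_eq: "ell2_norm (tail N x) = sqrt (suminf ?f - (\<Sum>m\<le>N. ?f m))" for N
    unfolding ell2_norm_def using suminf_diff[OF f head(1)] head(2) by simp
  have "(\<lambda>N. suminf ?f - (\<Sum>m\<le>N. ?f m)) \<longlonglongrightarrow> suminf ?f - suminf ?f"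
    by (intro tendsto_intros summable_LIMSEQ' f)
  then have "(\<lambda>N. sqrt (suminf ?f - (\<Sum>m\<le>N. ?f m))) \<longlonglongrightarrow> sqrt 0"
    by (intro tendsto_intros) simp
  then show ?thesis unfolding norm_eq by simp
qed

lemma bounded_linear_op_ell2_add:
  "bounded_linear_op_ell2 T \<Longrightarrow> x \<in> ell2 \<Longrightarrow> y \<in> ell2 \<Longrightarrow>
    T (\<lambda>m. x m + y m) = (\<lambda>m. T x m + T y m)"
  unfolding bounded_linear_op_ell2_def by blast

lemma bounded_linear_op_ell2_truncate:
  assumes T: "bounded_linear_op_ell2 T"
  shows "T (truncate N x) = (\<lambda>i. \<Sum>j\<le>N. x j * T (unit_seq j) i)"
proof (induction N)
  case 0
  have "truncate 0 x = (\<lambda>m. x 0 * unit_seq 0 m)"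
    by (auto simp: truncate_def unit_seq_def)
  then show ?case using T unit_seq_in_ell2 unfolding bounded_linear_op_ell2_def by auto
next
  case (Suc N)
  let ?e = "\<lambda>m. x (Suc N) * unit_seq (Suc N) m"
  have split: "truncate (Suc N) x = (\<lambda>m. truncate N x m + ?e m)"
    by (auto simp: truncate_def unit_seq_def le_Suc_eq)
  have e: "?e \<in> ell2"
    unfolding ell2_def unit_seq_def by (auto intro!: summable_finite[of "{Suc N}"] split: if_splits)
  have Te: "T ?e = (\<lambda>i. x (Suc N) * T (unit_seq (Suc N)) i)"
    using T unit_seq_in_ell2 unfolding bounded_linear_op_ell2_def by blast
  show ?case
    unfolding split bounded_linear_op_ell2_add[OF T truncate_in_ell2 e] Te Suc by simp
qed

lemma bounded_linear_op_ell2_coord_tendsto: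
  assumes T: "bounded_linear_op_ell2 T" and x: "x \<in> ell2"
  shows "(\<lambda>N. T (truncate N x) i) \<longlonglongrightarrow> T x i"
proof -
  obtain C where C: "\<And>y. y \<in> ell2 \<Longrightarrow> ell2_norm (T y) \<le> C * ell2_norm y"
    using T unfolding bounded_linear_op_ell2_def by blast
  have Tx: "T x i = T (truncate N x) i + T (tail N x) i" for N
  proof -
    have "T x = T (\<lambda>m. truncate N x m + tail N x m)"
      by (simp flip: truncate_plus_tail)
    then show ?thesis
      by (simp add: bounded_linear_op_ell2_add[OF T truncate_in_ell2 tail_in_ell2[OF x]])
  qed
  have bound: "cmod (T (tail N x) i) \<le> C * ell2_norm (tail N x)" for N
  proof -
    have "T (tail N x) \<in> ell2"
      using T tail_in_ell2[OF x] unfolding bounded_linear_op_ell2_def by blast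
    then have "cmod (T (tail N x) i) \<le> ell2_norm (T (tail N x))"
      by (rule cmod_le_ell2_norm)
    also have "\<dots> \<le> C * ell2_norm (tail N x)"
      using C tail_in_ell2[OF x] .
    finally show ?thesis .
  qed
  have "(\<lambda>N. C * ell2_norm (tail N x)) \<longlonglongrightarrow> 0"
    using tendsto_mult_right_zero[OF ell2_norm_tail_tendsto_0[OF x]] .
  then have "(\<lambda>N. T (tail N x) i) \<longlonglongrightarrow> 0"
    by (rule Lim_null_comparison[OF always_eventually, rotated]) (simp add: bound)
  then have "(\<lambda>N. T x i - T (tail N x) i) \<longlonglongrightarrow> T x i - 0"
    by (intro tendsto_intros)
  moreover have "T x i - T (tail N x) i = T (truncate N x) i" for N
    using Tx[of N] by simp
  ultimately show ?thesis by simp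
qed

lemma sum_basis_images_eq_matrix_shift:
  assumes head: "\<And>j. j \<le> n \<Longrightarrow> T (unit_seq j) = (\<lambda>i. if i \<le> n + k then a i j else 0)"
    and shift: "\<And>j. j \<ge> n + 1 \<Longrightarrow> T (unit_seq j) = unit_seq (j + k)"
    and "n \<le> N" "i \<le> N"
  shows "(\<Sum>j\<le>N. x j * T (unit_seq j) i) = matrix_shift n k a x i"
proof -
  have "{..N} = {..n} \<union> {Suc n..N}" using \<open>n \<le> N\<close> by auto
  then have "(\<Sum>j\<le>N. x j * T (unit_seq j) i) =
      (\<Sum>j\<le>n. x j * T (unit_seq j) i) + (\<Sum>j\<in>{Suc n..N}. x j * T (unit_seq j) i)"
    by (simp add: sum.union_disjoint)
  also have "(\<Sum>j\<le>n. x j * T (unit_seq j) i) = (if i \<le> n + k then \<Sum>j\<le>n. a i j * x j else 0)"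
    using head by (auto simp: mult.commute)
  also have "(\<Sum>j\<in>{Suc n..N}. x j * T (unit_seq j) i) =
      (\<Sum>j\<in>{Suc n..N}. if j = i - k \<and> k \<le> i then x j else 0)"
    using shift by (intro sum.cong) (auto simp: unit_seq_def)
  also have "\<dots> = (if i \<le> n + k then 0 else x (i - k))"
    using \<open>i \<le> N\<close> by (cases "k \<le> i") (auto simp: sum.delta')
  finally show ?thesis unfolding matrix_shift_def by auto
qed

lemma bounded_linear_op_ell2_eq_matrix_shift:
  assumes T: "bounded_linear_op_ell2 T"
    and "\<And>j. j \<le> n \<Longrightarrow> T (unit_seq j) = (\<lambda>i. if i \<le> n + k then a i j else 0)"
    and "\<And>j. j \<ge> n + 1 \<Longrightarrow> T (unit_seq j) = unit_seq (j + k)"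
    and x: "x \<in> ell2"
  shows "T x = matrix_shift n k a x"
proof
  fix i
  have "\<forall>\<^sub>F N in sequentially. T (truncate N x) i = matrix_shift n k a x i"
    using eventually_ge_at_top[of "max n i"]
    by eventually_elim
      (simp add: bounded_linear_op_ell2_truncate[OF T] sum_basis_images_eq_matrix_shift assms(2,3))
  then show "T x i = matrix_shift n k a x i"
    using LIMSEQ_unique[OF bounded_linear_op_ell2_coord_tendsto[OF T x] tendsto_eventually] by blast
qed

lemma cmod_eigenvalue_le_1_if_contraction:
  assumes "is_contraction_matrix n a" and "is_matrix_eigenvector n a \<mu> h"
  shows "cmod \<mu> \<le> 1"
proof -
  obtain i0 where "i0 \<le> n" "h i0 \<noteq> 0"
    using assms(2) unfolding is_matrix_eigenvector_def by blast
  then have "0 < (cmod (h i0))\<^sup>2" "(cmod (h i0))\<^sup>2 \<le> (\<Sum>j\<le>n. (cmod (h j))\<^sup>2)"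
    by (auto intro: member_le_sum)
  then have pos: "0 < (\<Sum>j\<le>n. (cmod (h j))\<^sup>2)" by linarith
  have "(cmod \<mu>)\<^sup>2 * (\<Sum>j\<le>n. (cmod (h j))\<^sup>2) = (\<Sum>i\<le>n. (cmod (\<Sum>j\<le>n. a i j * h j))\<^sup>2)"
    using assms(2) unfolding is_matrix_eigenvector_def
    by (simp add: sum_distrib_left norm_mult power_mult_distrib)
  also have "\<dots> \<le> 1 * (\<Sum>j\<le>n. (cmod (h j))\<^sup>2)"
    using assms(1) unfolding is_contraction_matrix_def by simp
  finally have "(cmod \<mu>)\<^sup>2 \<le> 1" using pos by (rule mult_right_le_imp_le)
  then show ?thesis by (simp add: power_le_one_iff)
qed

lemma ell2_eq_0_if_norm_nondecreasing_step:
  assumes x: "x \<in> ell2" and "0 < k"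
    and step: "\<And>j. m \<le> j \<Longrightarrow> cmod (x j) \<le> cmod (x (j + k))"
  shows "x m = 0"
proof -
  have grow: "cmod (x m) \<le> cmod (x (m + t * k))" for t
  proof (induction t)
    case (Suc t)
    have "cmod (x (m + t * k)) \<le> cmod (x (m + Suc t * k))"
      using step[of "m + t * k"] by (simp add: ac_simps)
    with Suc show ?case by linarith
  qed simp
  have "summable (\<lambda>j. (cmod (x j))\<^sup>2)" using x by (simp add: ell2_def)
  then have "(\<lambda>j. (cmod (x j))\<^sup>2) \<longlonglongrightarrow> 0" by (rule summable_LIMSEQ_zero)
  then have "(\<lambda>j. cmod (x j)) \<longlonglongrightarrow> 0" by simp
  moreover have "strict_mono (\<lambda>t. m + t * k)"
    using \<open>0 < k\<close> by (intro strict_monoI) simp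
  ultimately have "((\<lambda>j. cmod (x j)) \<circ> (\<lambda>t. m + t * k)) \<longlonglongrightarrow> 0"
    by (rule LIMSEQ_subseq_LIMSEQ)
  then have "cmod (x m) \<le> 0"
    by (rule LIMSEQ_le_const) (use grow in \<open>auto simp: comp_def\<close>)
  then show ?thesis by simp
qed

lemma matrix_shift_eigenvector_of_matrix_eigenvector:
  assumes "is_matrix_eigenvector n a \<mu> h"
    and "\<forall>l\<in>{1..k}. (\<Sum>r\<le>n. a (n + l) r * h r) = 0"
  shows "matrix_shift n k a (truncate n h) = (\<lambda>m. \<mu> * truncate n h m)"
proof
  fix i
  have "(\<Sum>j\<le>n. a i j * truncate n h j) = (\<Sum>j\<le>n. a i j * h j)"
    unfolding truncate_def by simp
  moreover have "(\<Sum>j\<le>n. a i j * h j) = 0" if "n < i" "i \<le> n + k"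
  proof -
    have "i - n \<in> {1..k}" "n + (i - n) = i" using that by auto
    then show ?thesis using assms(2) by metis
  qed
  ultimately show "matrix_shift n k a (truncate n h) i = \<mu> * truncate n h i"
    using assms(1) unfolding is_matrix_eigenvector_def matrix_shift_def truncate_def
    by auto
qed

lemma matrix_shift_eigenvector_eq_0_if_head_eq_0:
  assumes "0 < k" "\<mu> \<noteq> 0" and eig: "matrix_shift n k a x = (\<lambda>m. \<mu> * x m)"
    and head: "\<forall>i\<le>n. x i = 0"
  shows "x m = 0"
proof (induction m rule: less_induct)
  case (less m)
  have "\<mu> * x m = matrix_shift n k a x m" using eig by simp
  also have "\<dots> = 0"
    using head less[of "m - k"] \<open>0 < k\<close> unfolding matrix_shift_def by auto
  finally show ?case using \<open>\<mu> \<noteq> 0\<close> by simp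
qed

lemma matrix_shift_eigenvalue_iff:
  assumes "0 < k" "\<mu> \<noteq> 0" and contr: "is_contraction_matrix n a"
  shows "(\<exists>x\<in>ell2. x \<noteq> (\<lambda>_. 0) \<and> matrix_shift n k a x = (\<lambda>m. \<mu> * x m)) \<longleftrightarrow>
    (\<exists>h. is_matrix_eigenvector n a \<mu> h \<and> (\<forall>l\<in>{1..k}. (\<Sum>r\<le>n. a (n + l) r * h r) = 0))"
proof
  assume "\<exists>x\<in>ell2. x \<noteq> (\<lambda>_. 0) \<and> matrix_shift n k a x = (\<lambda>m. \<mu> * x m)"
  then obtain x where x: "x \<in> ell2" "x \<noteq> (\<lambda>_. 0)"
    and eig_fun: "matrix_shift n k a x = (\<lambda>m. \<mu> * x m)" by blast
  then have eig: "matrix_shift n k a x i = \<mu> * x i" for i by simp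
  have "\<exists>i\<le>n. x i \<noteq> 0"
  proof (rule ccontr)
    assume "\<not> (\<exists>i\<le>n. x i \<noteq> 0)"
    then have "x m = 0" for m
      using matrix_shift_eigenvector_eq_0_if_head_eq_0[OF assms(1,2) eig_fun] by blast
    with x(2) show False by auto
  qed
  moreover have head: "(\<Sum>j\<le>n. a i j * x j) = \<mu> * x i" if "i \<le> n + k" for i
    using eig[of i] that unfolding matrix_shift_def by simp
  ultimately have vec: "is_matrix_eigenvector n a \<mu> x"
    unfolding is_matrix_eigenvector_def by simp
  have "x (n + l) = 0" if "l \<in> {1..k}" for l
  proof (rule ell2_eq_0_if_norm_nondecreasing_step[OF x(1) \<open>0 < k\<close>])
    fix j assume "n + l \<le> j"
    then have "x j = \<mu> * x (j + k)"
      using eig[of "j + k"] that unfolding matrix_shift_def by simp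
    then show "cmod (x j) \<le> cmod (x (j + k))"
      using cmod_eigenvalue_le_1_if_contraction[OF contr vec]
      by (simp add: norm_mult mult_left_le_one_le)
  qed
  then have "\<forall>l\<in>{1..k}. (\<Sum>r\<le>n. a (n + l) r * x r) = 0"
    using head by simp
  with vec show "\<exists>h. is_matrix_eigenvector n a \<mu> h \<and>
      (\<forall>l\<in>{1..k}. (\<Sum>r\<le>n. a (n + l) r * h r) = 0)" by blast
next
  assume "\<exists>h. is_matrix_eigenvector n a \<mu> h \<and> (\<forall>l\<in>{1..k}. (\<Sum>r\<le>n. a (n + l) r * h r) = 0)"
  then obtain h where h: "is_matrix_eigenvector n a \<mu> h"
    and "\<forall>l\<in>{1..k}. (\<Sum>r\<le>n. a (n + l) r * h r) = 0" by blast
  then have "matrix_shift n k a (truncate n h) = (\<lambda>m. \<mu> * truncate n h m)"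
    by (rule matrix_shift_eigenvector_of_matrix_eigenvector)
  moreover have "truncate n h \<noteq> (\<lambda>_. 0)"
  proof
    obtain i where "i \<le> n" "h i \<noteq> 0"
      using h unfolding is_matrix_eigenvector_def by blast
    moreover assume "truncate n h = (\<lambda>_. 0)"
    then have "truncate n h i = 0" by simp
    ultimately show False by (simp add: truncate_def)
  qed
  ultimately show "\<exists>x\<in>ell2. x \<noteq> (\<lambda>_. 0) \<and> matrix_shift n k a x = (\<lambda>m. \<mu> * x m)"
    using truncate_in_ell2 by blast
qed

theorem corollary4p2:
  fixes n k :: nat and a :: "nat \<Rightarrow> nat \<Rightarrow> complex"
    and T :: "(nat \<Rightarrow> complex) \<Rightarrow> (nat \<Rightarrow> complex)"
  assumes "k \<ge> 1"
    and "bounded_linear_op_ell2 T"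
    and "\<And>j. j \<le> n \<Longrightarrow> T (unit_seq j) = (\<lambda>i. if i \<le> n + k then a i j else 0)"
    and "\<And>j. j \<ge> n + 1 \<Longrightarrow> T (unit_seq j) = unit_seq (j + k)"
    and "is_contraction_matrix n a"
  shows "(\<forall>\<mu>. \<mu> \<noteq> 0 \<longrightarrow> \<not> is_eigenvalue_ell2 T \<mu>) \<longleftrightarrow>
         (\<forall>\<mu> h. \<mu> \<noteq> 0 \<and> is_matrix_eigenvector n a \<mu> h \<longrightarrow>
            (\<exists>l\<in>{1..k}. (\<Sum>r\<le>n. a (n + l) r * h r) \<noteq> 0))"
proof -
  have "0 < k" using \<open>k \<ge> 1\<close> by simp
  have "is_eigenvalue_ell2 T \<mu> \<longleftrightarrow>
      (\<exists>x\<in>ell2. x \<noteq> (\<lambda>_. 0) \<and> matrix_shift n k a x = (\<lambda>m. \<mu> * x m))" for \<mu>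
    unfolding is_eigenvalue_ell2_def
    using bounded_linear_op_ell2_eq_matrix_shift[OF assms(2-4)] by auto
  then have "is_eigenvalue_ell2 T \<mu> \<longleftrightarrow>
      (\<exists>h. is_matrix_eigenvector n a \<mu> h \<and> (\<forall>l\<in>{1..k}. (\<Sum>r\<le>n. a (n + l) r * h r) = 0))"
    if "\<mu> \<noteq> 0" for \<mu>
    using matrix_shift_eigenvalue_iff[OF \<open>0 < k\<close> that assms(5)] by simp
  then show ?thesis by (meson atLeastAtMost_iff)
qed

end
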